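(* Let $\mathbf{A}\in\mathbb{R}^{n\times d}$ have columns normalized so that $\mathrm{diag}(\mathbf{A}^T\mathbf{A})=\mathbf{1}$, let $\mathbf{y}\in\mathbb{R}^n$, $\lambda\ge 0$, and let $\hat{\mathbf{A}}=[\mathbf{A},\,-\mathbf{A}]\in\mathbb{R}^{n\times 2d}$. Consider the (duplicated-feature) Lasso objective $$F(\mathbf{x})=\tfrac12\lVert \hat{\mathbf{A}}\mathbf{x}-\mathbf{y}\rVert_2^2+\lambda\sum_{j=1}^{2d}x_j,\qquad \mathbf{x}\in\mathbb{R}^{2d}_+.$$ Fix $\mathbf{x}\in\mathbb{R}^{2d}_+$ and an integer $P\ge1$. Let $\mathcal{P}_t=\{i_1,\dots,i_P\}$ be a multiset of indices in $\{1,\dots,2d\}$ (as chosen in one iteration of Shotgun), for each $j$ let $\delta x_j=\max\{-x_j,\,-(\nabla F(\mathbf{x}))_j\}$ (the Shooting update with $\beta=1$), and let $\Delta\mathbf{x}\in\mathbb{R}^{2d}$ be the collective update $(\Delta\mathbf{x})_k=\sum_{i_j\in\mathcal{P}_t:\,i_j=k}\delta x_{i_j}$. Then $$F(\mathbf{x}+\Delta\mathbf{x})-F(\mathbf{x})\le -\tfrac12\sum_{i_j\in\mathcal{P}_t}(\delta x_{i_j})^2+\tfrac12\sum_{\substack{i_j,i_k\in\mathcal{P}_t\\ j\ne k}}(\hat{\mathbf{A}}^T\hat{\mathbf{A}})_{i_j,i_k}\,\delta x_{i_j}\,\delta x_{i_k}.$$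
   Context: Shotgun (parallel stochastic coordinate descent) starts at $\mathbf{x}=\mathbf{0}\in\mathbb{R}^{2d}_+$ and in each iteration chooses $P$ indices $i_1,\dots,i_P$ independently and uniformly at random from $\{1,\dots,2d\}$ (forming a multiset $\mathcal{P}_t$), computes for each chosen index $j$ the update $\delta x_j=\max\{-x_j,-(\nabla F(\mathbf{x}))_j/\beta\}$ at the current $\mathbf{x}$, and applies all of them simultaneously, giving the collective update $\Delta\mathbf{x}$. For the Lasso $\beta=1$. The matrix written $\mathbf{A}^T\mathbf{A}$ in the paper's statement is the Gram matrix of the (duplicated) design matrix indexing the $2d$ coordinates, here $\hat{\mathbf{A}}^T\hat{\mathbf{A}}$. *)

theory Defs
  imports Main "HOL-Analysis.Analysis"
begin

text \<open>Matrices are functions nat => nat => real with explicit bounds.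
  A is n x d (rows i < n, columns j < d); coordinates of R^{2d} are indices 0..2d-1.\<close>

definition Ahat :: "(nat \<Rightarrow> nat \<Rightarrow> real) \<Rightarrow> nat \<Rightarrow> nat \<Rightarrow> nat \<Rightarrow> real" where
  "Ahat A d i j = (if j < d then A i j else - A i (j - d))"

definition lasso_F :: "(nat \<Rightarrow> nat \<Rightarrow> real) \<Rightarrow> (nat \<Rightarrow> real) \<Rightarrow> real \<Rightarrow> nat \<Rightarrow> nat
    \<Rightarrow> (nat \<Rightarrow> real) \<Rightarrow> real" where
  "lasso_F A y lam n d x =
     (1/2) * (\<Sum>i<n. ((\<Sum>j<2*d. Ahat A d i j * x j) - y i)\<^sup>2) + lam * (\<Sum>j<2*d. x j)"

definition lasso_grad :: "(nat \<Rightarrow> nat \<Rightarrow> real) \<Rightarrow> (nat \<Rightarrow> real) \<Rightarrow> real \<Rightarrow> nat \<Rightarrow> nat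
    \<Rightarrow> (nat \<Rightarrow> real) \<Rightarrow> nat \<Rightarrow> real" where
  "lasso_grad A y lam n d x j =
     (\<Sum>i<n. Ahat A d i j * ((\<Sum>k<2*d. Ahat A d i k * x k) - y i)) + lam"

definition gram :: "(nat \<Rightarrow> nat \<Rightarrow> real) \<Rightarrow> nat \<Rightarrow> nat \<Rightarrow> nat \<Rightarrow> nat \<Rightarrow> real" where
  "gram A n d j k = (\<Sum>i<n. Ahat A d i j * Ahat A d i k)"

definition shoot_delta :: "(nat \<Rightarrow> nat \<Rightarrow> real) \<Rightarrow> (nat \<Rightarrow> real) \<Rightarrow> real \<Rightarrow> nat \<Rightarrow> nat
    \<Rightarrow> (nat \<Rightarrow> real) \<Rightarrow> nat \<Rightarrow> real" where
  "shoot_delta A y lam n d x j = max (- x j) (- lasso_grad A y lam n d x j)"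

text \<open>Collective update for the selected index list I = [i_1,...,i_P] (a multiset with labels).\<close>
definition collective_update :: "nat list \<Rightarrow> (nat \<Rightarrow> real) \<Rightarrow> nat \<Rightarrow> real" where
  "collective_update I dx k = (\<Sum>j<length I. if I ! j = k then dx (I ! j) else 0)"

end

theory Submission
  imports Defs
begin

text \<open>Because F is quadratic, its second-order Taylor expansion in any direction D is exact, with
  Hessian the Gram matrix. For the collective update D the linear term becomes the sum of
  g_i \<delta>x_i over the selected indices (g the gradient at x), and every such term is at most -(\<delta>x_i)^2, since
  \<delta>x_i = max (-x_i) (-g_i) with x_i \<ge> 0. The quadratic term is the Gram form of the selected
  updates, whose diagonal contributes exactly the squares because the columns are normalized.\<close>

lemma sum_square_linear_form:
  fixes a :: "nat \<Rightarrow> nat \<Rightarrow> real"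
  shows "(\<Sum>i\<in>S. (\<Sum>j\<in>J. a i j * v j)\<^sup>2)
       = (\<Sum>j\<in>J. \<Sum>k\<in>J. (\<Sum>i\<in>S. a i j * a i k) * v j * v k)"
proof -
  have "(\<Sum>i\<in>S. (\<Sum>j\<in>J. a i j * v j)\<^sup>2)
      = (\<Sum>i\<in>S. \<Sum>j\<in>J. \<Sum>k\<in>J. a i j * a i k * v j * v k)"
    unfolding power2_eq_square sum_product by (simp add: algebra_simps)
  also have "\<dots> = (\<Sum>j\<in>J. \<Sum>i\<in>S. \<Sum>k\<in>J. a i j * a i k * v j * v k)"
    by (rule sum.swap)
  also have "\<dots> = (\<Sum>j\<in>J. \<Sum>k\<in>J. \<Sum>i\<in>S. a i j * a i k * v j * v k)"
    by (intro sum.cong refl sum.swap)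
  finally show ?thesis by (simp add: sum_distrib_right)
qed

lemma lasso_F_add:
  "lasso_F A y lam n d (\<lambda>k. x k + D k) - lasso_F A y lam n d x
     = (\<Sum>j<2*d. lasso_grad A y lam n d x j * D j)
       + (1/2) * (\<Sum>j<2*d. \<Sum>k<2*d. gram A n d j k * D j * D k)"
proof -
  define r where "r i = (\<Sum>j<2*d. Ahat A d i j * x j) - y i" for i
  define u where "u i = (\<Sum>j<2*d. Ahat A d i j * D j)" for i
  have residual_add: "(\<Sum>j<2*d. Ahat A d i j * (x j + D j)) - y i = r i + u i" for i
    unfolding r_def u_def by (simp add: distrib_left sum.distrib)
  have "lasso_F A y lam n d (\<lambda>k. x k + D k) - lasso_F A y lam n d x
      = (\<Sum>i<n. r i * u i) + lam * (\<Sum>j<2*d. D j) + (1/2) * (\<Sum>i<n. (u i)\<^sup>2)"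
    unfolding lasso_F_def residual_add r_def[symmetric]
    by (simp add: power2_eq_square algebra_simps sum.distrib sum_distrib_left sum_subtractf)
  also have "(\<Sum>i<n. r i * u i) = (\<Sum>j<2*d. (\<Sum>i<n. Ahat A d i j * r i) * D j)"
    unfolding u_def sum_distrib_left sum_distrib_right
    by (subst sum.swap) (simp add: mult_ac)
  also have "\<dots> + lam * (\<Sum>j<2*d. D j) = (\<Sum>j<2*d. lasso_grad A y lam n d x j * D j)"
    unfolding lasso_grad_def r_def[symmetric]
    by (simp add: sum_distrib_left distrib_right sum.distrib)
  also have "(\<Sum>i<n. (u i)\<^sup>2) = (\<Sum>j<2*d. \<Sum>k<2*d. gram A n d j k * D j * D k)"
    unfolding u_def gram_def by (rule sum_square_linear_form)
  finally show ?thesis .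
qed

lemma sum_mult_collective_update:
  assumes "\<forall>p<length I. I ! p < m"
  shows "(\<Sum>j<m. f j * collective_update I dx j) = (\<Sum>p<length I. f (I ! p) * dx (I ! p))"
proof -
  have "(\<Sum>j<m. f j * collective_update I dx j)
      = (\<Sum>p<length I. \<Sum>j<m. if I ! p = j then f j * dx (I ! p) else 0)"
    unfolding collective_update_def sum_distrib_left
    by (subst sum.swap) (intro sum.cong; auto)
  also have "\<dots> = (\<Sum>p<length I. f (I ! p) * dx (I ! p))"
    using assms by (intro sum.cong) (auto simp: sum.delta)
  finally show ?thesis .
qed

lemma quadratic_form_collective_update:
  assumes "\<forall>p<length I. I ! p < m"
  shows "(\<Sum>j<m. \<Sum>k<m. G j k * collective_update I dx j * collective_update I dx k)
       = (\<Sum>p<length I. \<Sum>q<length I. G (I ! p) (I ! q) * dx (I ! p) * dx (I ! q))"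
proof -
  have "(\<Sum>j<m. \<Sum>k<m. G j k * collective_update I dx j * collective_update I dx k)
      = (\<Sum>j<m. (\<Sum>q<length I. G j (I ! q) * dx (I ! q)) * collective_update I dx j)"
  proof (intro sum.cong refl)
    fix j
    have "(\<Sum>k<m. G j k * collective_update I dx j * collective_update I dx k)
        = (\<Sum>k<m. G j k * collective_update I dx k) * collective_update I dx j"
      by (simp add: sum_distrib_left sum_distrib_right mult_ac)
    then show "(\<Sum>k<m. G j k * collective_update I dx j * collective_update I dx k)
        = (\<Sum>q<length I. G j (I ! q) * dx (I ! q)) * collective_update I dx j"
      by (simp only: sum_mult_collective_update[OF assms])
  qed
  also have "\<dots> = (\<Sum>p<length I. (\<Sum>q<length I. G (I ! p) (I ! q) * dx (I ! q)) * dx (I ! p))"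
    by (rule sum_mult_collective_update[OF assms])
  finally show ?thesis by (simp add: sum_distrib_left sum_distrib_right mult_ac)
qed

lemma sum_sum_split_diagonal:
  fixes M :: "nat \<Rightarrow> nat \<Rightarrow> real"
  shows "(\<Sum>p<P. \<Sum>q<P. M p q) = (\<Sum>p<P. M p p) + (\<Sum>p<P. \<Sum>q<P. if p \<noteq> q then M p q else 0)"
proof -
  have "(\<Sum>q<P. M p q) = M p p + (\<Sum>q<P. if p \<noteq> q then M p q else 0)" if "p < P" for p
  proof -
    have "(\<Sum>q<P. M p q) = (\<Sum>q<P. (if p = q then M p q else 0) + (if p \<noteq> q then M p q else 0))"
      by (intro sum.cong) auto
    then show ?thesis using that by (simp add: sum.distrib)
  qed
  then show ?thesis by (simp add: sum.distrib)
qed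

lemma gram_diag_eq_1:
  assumes "\<forall>j<d. (\<Sum>i<n. (A i j)\<^sup>2) = 1" and "j < 2*d"
  shows "gram A n d j j = 1"
proof -
  have "(if j < d then j else j - d) < d" using assms(2) by auto
  then show ?thesis
    using assms(1) unfolding gram_def Ahat_def by (simp add: power2_eq_square split: if_splits)
qed

lemma mult_max_neg_le_neg_square:
  fixes g t :: real
  assumes "t \<ge> 0"
  shows "g * max (- t) (- g) \<le> - (max (- t) (- g))\<^sup>2"
proof (cases "g \<le> t")
  case True
  then show ?thesis by (simp add: max_def power2_eq_square)
next
  case False
  then have "t * t \<le> g * t" using assms by (simp add: mult_right_mono)
  then show ?thesis using False by (simp add: max_def power2_eq_square)
qed

theorem theorem3p1:
  fixes A :: "nat \<Rightarrow> nat \<Rightarrow> real" and y x :: "nat \<Rightarrow> real" and lam :: real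
    and n d P :: nat and I :: "nat list"
  assumes colnorm: "\<forall>j<d. (\<Sum>i<n. (A i j)\<^sup>2) = 1"
    and lam_nonneg: "lam \<ge> 0"
    and x_nonneg: "\<forall>j<2*d. x j \<ge> 0"
    and P_pos: "P \<ge> 1"
    and I_len: "length I = P"
    and I_range: "\<forall>j<P. I ! j < 2*d"
  shows "lasso_F A y lam n d (\<lambda>k. x k + collective_update I (shoot_delta A y lam n d x) k)
           - lasso_F A y lam n d x
         \<le> - (1/2) * (\<Sum>j<P. (shoot_delta A y lam n d x (I ! j))\<^sup>2)
           + (1/2) * (\<Sum>j<P. \<Sum>k<P. if j \<noteq> k then
                gram A n d (I ! j) (I ! k) * shoot_delta A y lam n d x (I ! j)
                  * shoot_delta A y lam n d x (I ! k) else 0)"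
proof -
  define \<delta> where "\<delta> = shoot_delta A y lam n d x"
  define g where "g = lasso_grad A y lam n d x"
  define off_diag where "off_diag = (\<Sum>p<P. \<Sum>q<P. if p \<noteq> q then
      gram A n d (I ! p) (I ! q) * \<delta> (I ! p) * \<delta> (I ! q) else 0)"
  have range: "\<forall>p<length I. I ! p < 2*d" using I_range I_len by simp
  have descent: "(\<Sum>p<P. g (I ! p) * \<delta> (I ! p)) \<le> (\<Sum>p<P. - (\<delta> (I ! p))\<^sup>2)"
    using x_nonneg I_range unfolding \<delta>_def shoot_delta_def g_def
    by (intro sum_mono mult_max_neg_le_neg_square) auto
  have quadratic: "(\<Sum>p<P. \<Sum>q<P. gram A n d (I ! p) (I ! q) * \<delta> (I ! p) * \<delta> (I ! q))
      = (\<Sum>p<P. (\<delta> (I ! p))\<^sup>2) + off_diag"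
  proof -
    have "(\<Sum>p<P. gram A n d (I ! p) (I ! p) * \<delta> (I ! p) * \<delta> (I ! p)) = (\<Sum>p<P. (\<delta> (I ! p))\<^sup>2)"
      using gram_diag_eq_1[OF colnorm] I_range by (simp add: power2_eq_square)
    then show ?thesis unfolding off_diag_def by (subst sum_sum_split_diagonal) simp
  qed
  have "lasso_F A y lam n d (\<lambda>k. x k + collective_update I \<delta> k) - lasso_F A y lam n d x
      = (\<Sum>p<P. g (I ! p) * \<delta> (I ! p)) + (1/2) * ((\<Sum>p<P. (\<delta> (I ! p))\<^sup>2) + off_diag)"
    unfolding lasso_F_add quadratic_form_collective_update[OF range]
    unfolding g_def[symmetric] sum_mult_collective_update[OF range] I_len quadratic ..
  also have "\<dots> \<le> - (1/2) * (\<Sum>p<P. (\<delta> (I ! p))\<^sup>2) + (1/2) * off_diag"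
    using descent by (simp add: sum_negf algebra_simps)
  finally show ?thesis unfolding \<delta>_def off_diag_def .
qed

end
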